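(* Let $\mathcal X=(\Omega,S)$ be a scheme with $n=|\Omega|$ such that $4c(m-1)<n$, where $c=c(\mathcal X)$ and $m=n_{\max}$. Then for every $\alpha\in\Omega$ the coherent configuration $\mathcal X_\alpha$ is $1$-regular. In particular, $b(\mathcal X)\le 2$.
   Context: A coherent configuration on a finite set $\Omega$ is $(\Omega,S)$ with $S$ a partition of $\Omega\times\Omega$ such that $1_\Omega$ is a union of elements of $S$, $s^*=\{(\beta,\alpha):(\alpha,\beta)\in s\}\in S$, and for $r,s,t\in S$ the number $|\{\gamma:(\alpha,\gamma)\in r,(\gamma,\beta)\in s\}|$ is independent of $(\alpha,\beta)\in t$; it is a scheme if $1_\Omega\in S$. Valency of $r\in S$ in a scheme: $n_r=|\{\beta:(\alpha,\beta)\in r\}|$ (independent of $\alpha$); $n_{\max}=\max_{r\in S}n_r$. For $\alpha,\beta\in\Omega$, $r(\alpha,\beta)$ is the element of $S$ containing $(\alpha,\beta)$. For $s\in S$ and $(\alpha,\beta)\in s$, the indistinguishing number $c(s)=|\{\gamma\in\Omega: r(\alpha,\gamma)=r(\beta,\gamma)\}|$ (independent of the choice of $(\alpha,\beta)$); $c(\mathcal X)$ is the maximum of $c(s)$ over $s\in S$, $s\ne 1_\Omega$. Fibers: sets $\Gamma$ with $1_\Gamma\in S$. Fission: configuration on $\Omega$ whose relations (unions of basic relations) include those of $\mathcal X$; complete: all basic relations singletons. $\mathcal X_\alpha$ is the smallest fission in which $\{\alpha\}$ is a fiber. A coherent configuration $(\Omega,T)$ is $1$-regular if some point $\gamma$ satisfies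 $|\{\delta:(\gamma,\delta)\in t\}|\le1$ for all $t\in T$. A set $B$ is a base if the smallest fission in which all $\{\beta\}$, $\beta\in B$, are fibers is complete; $b(\mathcal X)$ is the minimal size of a base. *)

theory Defs
  imports Main
begin

definition coherent_config :: "'a set \<Rightarrow> ('a \<times> 'a) set set \<Rightarrow> bool" where
  "coherent_config \<Omega> S \<longleftrightarrow>
     finite \<Omega> \<and>
     (\<forall>s\<in>S. s \<noteq> {}) \<and>
     (\<forall>s\<in>S. \<forall>t\<in>S. s \<noteq> t \<longrightarrow> s \<inter> t = {}) \<and>
     \<Union>S = \<Omega> \<times> \<Omega> \<and>
     (\<forall>s\<in>S. s \<subseteq> Id_on \<Omega> \<or> s \<inter> Id_on \<Omega> = {}) \<and>
     (\<forall>s\<in>S. converse s \<in> S) \<and>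
     (\<forall>r\<in>S. \<forall>s\<in>S. \<forall>t\<in>S. \<forall>x\<in>t. \<forall>y\<in>t.
        card {\<gamma>. (fst x, \<gamma>) \<in> r \<and> (\<gamma>, snd x) \<in> s}
      = card {\<gamma>. (fst y, \<gamma>) \<in> r \<and> (\<gamma>, snd y) \<in> s})"

definition scheme :: "'a set \<Rightarrow> ('a \<times> 'a) set set \<Rightarrow> bool" where
  "scheme \<Omega> S \<longleftrightarrow> coherent_config \<Omega> S \<and> Id_on \<Omega> \<in> S"

text \<open>n_max: the maximal valency (in a scheme the valency does not depend on the point).\<close>
definition n_max :: "'a set \<Rightarrow> ('a \<times> 'a) set set \<Rightarrow> nat" where
  "n_max \<Omega> S = Max {card {\<beta>. (\<alpha>, \<beta>) \<in> r} | \<alpha> r. \<alpha> \<in> \<Omega> \<and> r \<in> S}"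

definition indist :: "'a set \<Rightarrow> ('a \<times> 'a) set set \<Rightarrow> 'a \<Rightarrow> 'a \<Rightarrow> nat" where
  "indist \<Omega> S \<alpha> \<beta> = card {\<gamma>\<in>\<Omega>. \<exists>r\<in>S. (\<alpha>, \<gamma>) \<in> r \<and> (\<beta>, \<gamma>) \<in> r}"

definition indist_number :: "'a set \<Rightarrow> ('a \<times> 'a) set set \<Rightarrow> nat" where
  "indist_number \<Omega> S =
     Max {indist \<Omega> S \<alpha> \<beta> | \<alpha> \<beta> s. s \<in> S \<and> s \<noteq> Id_on \<Omega> \<and> (\<alpha>, \<beta>) \<in> s}"

definition fission :: "'a set \<Rightarrow> ('a \<times> 'a) set set \<Rightarrow> ('a \<times> 'a) set set \<Rightarrow> bool" where
  "fission \<Omega> S T \<longleftrightarrow> coherent_config \<Omega> T \<and> (\<forall>s\<in>S. \<exists>U\<subseteq>T. s = \<Union>U)"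

definition smallest_point_fission ::
  "'a set \<Rightarrow> ('a \<times> 'a) set set \<Rightarrow> 'a set \<Rightarrow> ('a \<times> 'a) set set \<Rightarrow> bool" where
  "smallest_point_fission \<Omega> S B T \<longleftrightarrow>
     fission \<Omega> S T \<and> (\<forall>\<beta>\<in>B. {(\<beta>, \<beta>)} \<in> T) \<and>
     (\<forall>T'. fission \<Omega> S T' \<and> (\<forall>\<beta>\<in>B. {(\<beta>, \<beta>)} \<in> T') \<longrightarrow> fission \<Omega> T T')"

definition one_regular :: "'a set \<Rightarrow> ('a \<times> 'a) set set \<Rightarrow> bool" where
  "one_regular \<Omega> T \<longleftrightarrow> (\<exists>\<gamma>\<in>\<Omega>. \<forall>t\<in>T. card {\<delta>. (\<gamma>, \<delta>) \<in> t} \<le> 1)"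

definition complete_config :: "('a \<times> 'a) set set \<Rightarrow> bool" where
  "complete_config T \<longleftrightarrow> (\<forall>t\<in>T. card t = 1)"

definition is_base :: "'a set \<Rightarrow> ('a \<times> 'a) set set \<Rightarrow> 'a set \<Rightarrow> bool" where
  "is_base \<Omega> S B \<longleftrightarrow> B \<subseteq> \<Omega> \<and>
     (\<exists>T. smallest_point_fission \<Omega> S B T \<and> complete_config T)"

definition base_number :: "'a set \<Rightarrow> ('a \<times> 'a) set set \<Rightarrow> nat" where
  "base_number \<Omega> S = (LEAST k. \<exists>B. is_base \<Omega> S B \<and> card B = k)"

end

theory Submission
  imports Defs
begin

text \<open>Let \<open>T\<close> be a fission of \<open>S\<close> in which \<open>{\<alpha>}\<close> is a fiber, and suppose that no point is
  1-regular for \<open>T\<close>. Then from every point \<open>\<gamma>\<close> two distinct points \<open>x, x'\<close> lie in one basic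
  relation of \<open>T\<close>. A point \<open>\<delta>\<close> that is alone in its relation from \<open>\<gamma>\<close> satisfies
  \<open>r(\<delta>, x) = r(\<delta>, x')\<close>, which happens for at most \<open>c\<close> points; so at least \<open>n - c\<close> ordered
  pairs of distinct points share their relation from \<open>\<gamma>\<close>. Conversely, the fiber \<open>{\<alpha>}\<close> transports
  such a coincidence from \<open>\<gamma>\<close> to \<open>\<alpha>\<close>, and hence into a basic relation of \<open>S\<close> from \<open>\<alpha>\<close>:
  there are at most \<open>n (m - 1)\<close> such pairs, each a coincidence at no more than \<open>c\<close> points.
  Double counting gives \<open>n - c \<le> c (m - 1)\<close>, contradicting \<open>2 c (m - 1) < n\<close>.

  Once \<open>\<gamma>\<close> is 1-regular for \<open>\<X>\<^sub>\<alpha>\<close>, making \<open>{\<gamma>}\<close> a fiber as well turns every pair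
  \<open>(\<gamma>, x)\<close> into a basic relation, and intersection numbers through \<open>\<gamma>\<close> then separate all
  pairs, so \<open>{\<alpha>, \<gamma>}\<close> is a base. Smallest fissions exist because the join of coherent
  configurations in the lattice of partitions of \<open>\<Omega> \<times> \<Omega>\<close> is again coherent.\<close>

section \<open>Basic relations of a coherent configuration\<close>

definition intersection_count :: "('a \<times> 'a) set \<Rightarrow> ('a \<times> 'a) set \<Rightarrow> 'a \<Rightarrow> 'a \<Rightarrow> nat" where
  "intersection_count r s a b = card {\<gamma>. (a, \<gamma>) \<in> r \<and> (\<gamma>, b) \<in> s}"

definition same_class :: "('a \<times> 'a) set set \<Rightarrow> 'a \<times> 'a \<Rightarrow> 'a \<times> 'a \<Rightarrow> bool" where
  "same_class T p q \<longleftrightarrow> (\<exists>t\<in>T. p \<in> t \<and> q \<in> t)"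

lemma cc_finite: "coherent_config \<Omega> T \<Longrightarrow> finite \<Omega>"
  by (simp add: coherent_config_def)

lemma cc_basic_nonempty: "coherent_config \<Omega> T \<Longrightarrow> t \<in> T \<Longrightarrow> t \<noteq> {}"
  by (simp add: coherent_config_def)

lemma cc_basic_subset: "coherent_config \<Omega> T \<Longrightarrow> t \<in> T \<Longrightarrow> t \<subseteq> \<Omega> \<times> \<Omega>"
  by (auto simp: coherent_config_def)

lemma cc_basic_unique:
  assumes "coherent_config \<Omega> T" "t \<in> T" "t' \<in> T" "p \<in> t" "p \<in> t'"
  shows "t = t'"
proof -
  have "\<forall>s\<in>T. \<forall>t\<in>T. s \<noteq> t \<longrightarrow> s \<inter> t = {}"
    using assms(1) by (simp add: coherent_config_def)
  then show ?thesis
    using assms(2-5) by blast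
qed

lemma cc_basicE:
  assumes "coherent_config \<Omega> T" "p \<in> \<Omega> \<times> \<Omega>"
  obtains t where "t \<in> T" "p \<in> t"
proof -
  have "\<Union>T = \<Omega> \<times> \<Omega>"
    using assms(1) by (simp add: coherent_config_def)
  then show ?thesis
    using assms(2) that by blast
qed

lemma cc_converse: "coherent_config \<Omega> T \<Longrightarrow> t \<in> T \<Longrightarrow> converse t \<in> T"
  by (simp add: coherent_config_def)

lemma cc_diagonal: "coherent_config \<Omega> T \<Longrightarrow> t \<in> T \<Longrightarrow> t \<subseteq> Id_on \<Omega> \<or> t \<inter> Id_on \<Omega> = {}"
  by (simp add: coherent_config_def)

lemma cc_intersection_count_eq:
  assumes "coherent_config \<Omega> T" "r \<in> T" "s \<in> T" "t \<in> T" "(a, b) \<in> t" "(a', b') \<in> t"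
  shows "intersection_count r s a b = intersection_count r s a' b'"
proof -
  have "\<forall>r\<in>T. \<forall>s\<in>T. \<forall>t\<in>T. \<forall>x\<in>t. \<forall>y\<in>t.
          card {\<gamma>. (fst x, \<gamma>) \<in> r \<and> (\<gamma>, snd x) \<in> s}
        = card {\<gamma>. (fst y, \<gamma>) \<in> r \<and> (\<gamma>, snd y) \<in> s}"
    using assms(1) unfolding coherent_config_def by (elim conjE)
  from this[rule_format, OF assms(2-6)] show ?thesis
    by (simp add: intersection_count_def)
qed

lemma cc_finite_basics: "coherent_config \<Omega> T \<Longrightarrow> finite T"
  by (rule finite_subset[of _ "Pow (\<Omega> \<times> \<Omega>)"]) (auto dest: cc_basic_subset cc_finite)

lemma same_class_mem: "coherent_config \<Omega> T \<Longrightarrow> same_class T p q \<Longrightarrow> p \<in> \<Omega> \<times> \<Omega> \<and> q \<in> \<Omega> \<times> \<Omega>"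
  unfolding same_class_def using cc_basic_subset by blast

lemma swap_in_converse: "prod.swap p \<in> converse r \<longleftrightarrow> p \<in> r"
  by (cases p) simp

lemma same_class_swap:
  assumes "coherent_config \<Omega> T" "same_class T p q"
  shows "same_class T (prod.swap p) (prod.swap q)"
proof -
  obtain t where "t \<in> T" "p \<in> t" "q \<in> t"
    using assms(2) unfolding same_class_def by blast
  moreover from \<open>t \<in> T\<close> have "converse t \<in> T"
    by (rule cc_converse[OF assms(1)])
  moreover have "prod.swap p \<in> converse t" "prod.swap q \<in> converse t"
    using \<open>p \<in> t\<close> \<open>q \<in> t\<close> by (simp_all add: swap_in_converse)
  ultimately show ?thesis
    unfolding same_class_def by (intro bexI[of _ "converse t"] conjI)
qed

lemma cc_in_Union_iff:
  assumes cT: "coherent_config \<Omega> T" and "U \<subseteq> T" "t \<in> T" "p \<in> t"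
  shows "p \<in> \<Union>U \<longleftrightarrow> t \<in> U"
proof
  assume "p \<in> \<Union>U"
  then obtain u where "u \<in> U" "p \<in> u"
    by blast
  with cc_basic_unique[OF cT _ assms(3) _ assms(4)] assms(2) show "t \<in> U"
    by blast
qed (use assms(4) in blast)

lemma cc_Id_on_eq_Union: "coherent_config \<Omega> T \<Longrightarrow> Id_on \<Omega> = \<Union>{t\<in>T. t \<subseteq> Id_on \<Omega>}"
proof (intro equalityI subsetI)
  fix p assume cT: "coherent_config \<Omega> T" and "p \<in> Id_on \<Omega>"
  then obtain t where "t \<in> T" "p \<in> t"
    using cc_basicE[OF cT, of p] by blast
  with cc_diagonal[OF cT \<open>t \<in> T\<close>] \<open>p \<in> Id_on \<Omega>\<close> show "p \<in> \<Union>{t\<in>T. t \<subseteq> Id_on \<Omega>}"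
    by blast
qed blast

lemma intersection_count_Union:
  assumes cT: "coherent_config \<Omega> T" and "U \<subseteq> T" "V \<subseteq> T"
  shows "intersection_count (\<Union>U) (\<Union>V) a b = (\<Sum>(u, v)\<in>U \<times> V. intersection_count u v a b)"
proof -
  define A :: "('a \<times> 'a) set \<times> ('a \<times> 'a) set \<Rightarrow> 'a set"
    where "A = (\<lambda>(u, v). {\<gamma>. (a, \<gamma>) \<in> u \<and> (\<gamma>, b) \<in> v})"
  have "{\<gamma>. (a, \<gamma>) \<in> \<Union>U \<and> (\<gamma>, b) \<in> \<Union>V} = \<Union>(A ` (U \<times> V))"
    by (auto simp: A_def)
  moreover have "card (\<Union>(A ` (U \<times> V))) = (\<Sum>i\<in>U \<times> V. card (A i))"
  proof (rule card_UN_disjoint)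
    show "finite (U \<times> V)"
      using assms(2,3) cc_finite_basics[OF cT] by (simp add: finite_subset)
    show "\<forall>i\<in>U \<times> V. finite (A i)"
    proof
      fix i assume "i \<in> U \<times> V"
      then have "A i \<subseteq> \<Omega>"
        using assms(2) cc_basic_subset[OF cT] by (auto simp: A_def)
      then show "finite (A i)"
        using cc_finite[OF cT] by (rule finite_subset)
    qed
    show "\<forall>i\<in>U \<times> V. \<forall>j\<in>U \<times> V. i \<noteq> j \<longrightarrow> A i \<inter> A j = {}"
      using assms(2,3) cc_basic_unique[OF cT] by (auto simp: A_def) blast+
  qed
  ultimately show ?thesis
    by (simp add: intersection_count_def A_def case_prod_unfold)
qed

lemma intersection_count_Union_eq:
  assumes cT: "coherent_config \<Omega> T" and "U \<subseteq> T" "V \<subseteq> T"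
    and "t \<in> T" "(a, b) \<in> t" "(a', b') \<in> t"
  shows "intersection_count (\<Union>U) (\<Union>V) a b = intersection_count (\<Union>U) (\<Union>V) a' b'"
  unfolding intersection_count_Union[OF assms(1-3)]
  using assms by (intro sum.cong refl) (auto intro: cc_intersection_count_eq[OF cT])

lemma fiber_row:
  assumes cT: "coherent_config \<Omega> T" and "{(\<beta>, \<beta>)} \<in> T" "w \<in> T" "(\<beta>, x) \<in> w" "(a, b) \<in> w"
  shows "a = \<beta>"
proof (rule ccontr)
  assume "a \<noteq> \<beta>"
  then have "intersection_count {(\<beta>, \<beta>)} w a b = 0"
    by (simp add: intersection_count_def)
  moreover have "{\<gamma>. (\<beta>, \<gamma>) \<in> {(\<beta>, \<beta>)} \<and> (\<gamma>, x) \<in> w} = {\<beta>}"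
    using assms(4) by auto
  then have "intersection_count {(\<beta>, \<beta>)} w \<beta> x = 1"
    by (simp add: intersection_count_def)
  moreover have "intersection_count {(\<beta>, \<beta>)} w \<beta> x = intersection_count {(\<beta>, \<beta>)} w a b"
    by (rule cc_intersection_count_eq[OF cT assms(2,3,3,4,5)])
  ultimately show False
    by simp
qed

lemma fiber_column:
  assumes cT: "coherent_config \<Omega> T" and "{(\<beta>, \<beta>)} \<in> T" "w \<in> T" "(x, \<beta>) \<in> w" "(a, b) \<in> w"
  shows "b = \<beta>"
  using fiber_row[OF cT assms(2) cc_converse[OF cT assms(3)]] assms(4,5) by simp

lemma same_class_transfer:
  assumes cT: "coherent_config \<Omega> T" and "r \<in> T" and row: "{e. (\<gamma>, e) \<in> r} = {\<delta>}"
    and "same_class T (\<gamma>, x) (\<gamma>, x')"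
  shows "same_class T (\<delta>, x) (\<delta>, x')"
proof -
  obtain t where t: "t \<in> T" "(\<gamma>, x) \<in> t" "(\<gamma>, x') \<in> t"
    using assms(4) unfolding same_class_def by blast
  have row_iff: "(\<gamma>, e) \<in> r \<longleftrightarrow> e = \<delta>" for e
    using row by (simp add: set_eq_iff)
  have "(\<gamma>, \<delta>) \<in> r"
    using row_iff by simp
  then have "(\<delta>, x) \<in> \<Omega> \<times> \<Omega>"
    using cc_basic_subset[OF cT assms(2)] cc_basic_subset[OF cT t(1)] t(2) by blast
  then obtain v where v: "v \<in> T" "(\<delta>, x) \<in> v"
    by (rule cc_basicE[OF cT])
  have count: "intersection_count r v \<gamma> y = (if (\<delta>, y) \<in> v then 1 else 0)" for y
  proof -
    have "{e. (\<gamma>, e) \<in> r \<and> (e, y) \<in> v} = (if (\<delta>, y) \<in> v then {\<delta>} else {})"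
      using row_iff by auto
    then show ?thesis
      by (simp add: intersection_count_def)
  qed
  have "intersection_count r v \<gamma> x' = intersection_count r v \<gamma> x"
    by (rule cc_intersection_count_eq[OF cT assms(2) v(1) t(1,3,2)])
  also have "\<dots> = 1"
    using count[of x] v(2) by simp
  finally have "(\<delta>, x') \<in> v"
    using count[of x'] by (cases "(\<delta>, x') \<in> v") simp_all
  with v show ?thesis
    unfolding same_class_def by blast
qed

lemma fission_basic_subset:
  assumes "fission \<Omega> S T" "t \<in> T" "s \<in> S" "p \<in> t" "p \<in> s"
  shows "t \<subseteq> s"
proof -
  have cT: "coherent_config \<Omega> T"
    using assms(1) by (simp add: fission_def)
  obtain U where "U \<subseteq> T" "s = \<Union>U"
    using assms(1,3) unfolding fission_def by blast
  then obtain u where "u \<in> T" "u \<subseteq> s" "p \<in> u"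
    using assms(5) by blast
  with cc_basic_unique[OF cT \<open>u \<in> T\<close> assms(2) \<open>p \<in> u\<close> assms(4)] show ?thesis
    by simp
qed

lemma fission_same_class:
  assumes cS: "coherent_config \<Omega> S" and "fission \<Omega> S T" and "same_class T p q"
  shows "same_class S p q"
proof -
  have cT: "coherent_config \<Omega> T"
    using assms(2) by (simp add: fission_def)
  obtain t where t: "t \<in> T" "p \<in> t" "q \<in> t"
    using assms(3) unfolding same_class_def by blast
  obtain s where s: "s \<in> S" "p \<in> s"
    using cc_basicE[OF cS] same_class_mem[OF cT assms(3)] by blast
  have "q \<in> s"
    using fission_basic_subset[OF assms(2) t(1) s(1) t(2) s(2)] t(3) by blast
  with s show ?thesis
    unfolding same_class_def by blast
qed

lemma indist_le_indist_number:
  assumes cS: "coherent_config \<Omega> S" and "\<delta> \<in> \<Omega>" "\<delta>' \<in> \<Omega>" "\<delta> \<noteq> \<delta>'"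
  shows "indist \<Omega> S \<delta> \<delta>' \<le> indist_number \<Omega> S"
proof -
  let ?C = "{indist \<Omega> S \<alpha> \<beta> | \<alpha> \<beta> s. s \<in> S \<and> s \<noteq> Id_on \<Omega> \<and> (\<alpha>, \<beta>) \<in> s}"
  have "?C \<subseteq> {..card \<Omega>}"
    by (auto simp: indist_def intro!: card_mono[OF cc_finite[OF cS]])
  then have "finite ?C"
    by (rule finite_subset) simp
  obtain s where "s \<in> S" "(\<delta>, \<delta>') \<in> s"
    using cc_basicE[OF cS] assms(2,3) by blast
  moreover have "s \<noteq> Id_on \<Omega>"
    using \<open>(\<delta>, \<delta>') \<in> s\<close> assms(4) by auto
  ultimately have "indist \<Omega> S \<delta> \<delta>' \<in> ?C"
    by blast
  then show ?thesis
    unfolding indist_number_def using \<open>finite ?C\<close> by (rule Max_ge[rotated])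
qed

lemma card_same_class_column_le:
  assumes cS: "coherent_config \<Omega> S" and fis: "fission \<Omega> S T"
    and "\<delta> \<in> \<Omega>" "\<delta>' \<in> \<Omega>" "\<delta> \<noteq> \<delta>'"
  shows "card {\<gamma>\<in>\<Omega>. same_class T (\<gamma>, \<delta>) (\<gamma>, \<delta>')} \<le> indist_number \<Omega> S"
proof -
  have "{\<gamma>\<in>\<Omega>. same_class T (\<gamma>, \<delta>) (\<gamma>, \<delta>')} \<subseteq> {\<gamma>\<in>\<Omega>. \<exists>r\<in>S. (\<delta>, \<gamma>) \<in> r \<and> (\<delta>', \<gamma>) \<in> r}"
  proof safe
    fix \<gamma> assume "\<gamma> \<in> \<Omega>" "same_class T (\<gamma>, \<delta>) (\<gamma>, \<delta>')"
    then obtain s where "s \<in> S" "(\<gamma>, \<delta>) \<in> s" "(\<gamma>, \<delta>') \<in> s"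
      using fission_same_class[OF cS fis] unfolding same_class_def by blast
    then show "\<exists>r\<in>S. (\<delta>, \<gamma>) \<in> r \<and> (\<delta>', \<gamma>) \<in> r"
      using cc_converse[OF cS] by (intro bexI[of _ "converse s"]) auto
  qed
  then have "card {\<gamma>\<in>\<Omega>. same_class T (\<gamma>, \<delta>) (\<gamma>, \<delta>')} \<le> indist \<Omega> S \<delta> \<delta>'"
    unfolding indist_def using cc_finite[OF cS] by (intro card_mono) auto
  also have "\<dots> \<le> indist_number \<Omega> S"
    by (rule indist_le_indist_number[OF cS assms(3-5)])
  finally show ?thesis .
qed

lemma card_row_le_n_max:
  assumes cS: "coherent_config \<Omega> S" and "\<alpha> \<in> \<Omega>" "s \<in> S"
  shows "card {\<beta>. (\<alpha>, \<beta>) \<in> s} \<le> n_max \<Omega> S"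
proof -
  let ?C = "{card {\<beta>. (\<alpha>, \<beta>) \<in> r} | \<alpha> r. \<alpha> \<in> \<Omega> \<and> r \<in> S}"
  have "?C \<subseteq> {..card \<Omega>}"
    using cc_basic_subset[OF cS] by (fastforce intro!: card_mono[OF cc_finite[OF cS]])
  then have "finite ?C"
    by (rule finite_subset) simp
  moreover have "card {\<beta>. (\<alpha>, \<beta>) \<in> s} \<in> ?C"
    using assms(2,3) by blast
  ultimately show ?thesis
    unfolding n_max_def by (rule Max_ge)
qed

lemma card_same_class_row_le:
  assumes cS: "coherent_config \<Omega> S" and "\<alpha> \<in> \<Omega>" "\<delta> \<in> \<Omega>"
  shows "card {\<delta>'. \<delta>' \<noteq> \<delta> \<and> same_class S (\<alpha>, \<delta>) (\<alpha>, \<delta>')} \<le> n_max \<Omega> S - 1"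
proof -
  obtain s where s: "s \<in> S" "(\<alpha>, \<delta>) \<in> s"
    using cc_basicE[OF cS] assms(2,3) by blast
  have "{\<delta>'. \<delta>' \<noteq> \<delta> \<and> same_class S (\<alpha>, \<delta>) (\<alpha>, \<delta>')} = {\<beta>. (\<alpha>, \<beta>) \<in> s} - {\<delta>}"
    using s cc_basic_unique[OF cS] unfolding same_class_def by blast
  moreover have "finite {\<beta>. (\<alpha>, \<beta>) \<in> s}"
    using cc_basic_subset[OF cS s(1)] cc_finite[OF cS] by (auto intro: finite_subset)
  ultimately show ?thesis
    using card_row_le_n_max[OF cS assms(2) s(1)] s(2) by simp
qed

section \<open>Coincidences in rows\<close>

definition row_coincidences :: "'a set \<Rightarrow> ('a \<times> 'a) set set \<Rightarrow> 'a \<Rightarrow> ('a \<times> 'a) set" where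
  "row_coincidences \<Omega> T \<gamma> = {(\<delta>, \<delta>') \<in> \<Omega> \<times> \<Omega>. \<delta> \<noteq> \<delta>' \<and> same_class T (\<gamma>, \<delta>) (\<gamma>, \<delta>')}"

lemma finite_row_coincidences: "finite \<Omega> \<Longrightarrow> finite (row_coincidences \<Omega> T \<gamma>)"
  unfolding row_coincidences_def by (rule finite_subset[of _ "\<Omega> \<times> \<Omega>"]) auto

lemma card_row_coincidences_le:
  assumes cS: "coherent_config \<Omega> S" and "\<alpha> \<in> \<Omega>"
  shows "card (row_coincidences \<Omega> S \<alpha>) \<le> card \<Omega> * (n_max \<Omega> S - 1)"
proof -
  let ?row = "\<lambda>\<delta>. {\<delta>'. \<delta>' \<noteq> \<delta> \<and> same_class S (\<alpha>, \<delta>) (\<alpha>, \<delta>')}"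
  have fin: "finite \<Omega>"
    by (rule cc_finite[OF cS])
  have "row_coincidences \<Omega> S \<alpha> = Sigma \<Omega> ?row"
    unfolding row_coincidences_def using same_class_mem[OF cS] by fast
  moreover have "finite (?row \<delta>)" for \<delta>
    using same_class_mem[OF cS] by (intro finite_subset[OF _ fin]) blast
  ultimately have "card (row_coincidences \<Omega> S \<alpha>) = (\<Sum>\<delta>\<in>\<Omega>. card (?row \<delta>))"
    using fin by simp
  also have "\<dots> \<le> of_nat (card \<Omega>) * (n_max \<Omega> S - 1)"
    by (rule sum_bounded_above) (rule card_same_class_row_le[OF cS \<open>\<alpha> \<in> \<Omega>\<close>])
  finally show ?thesis
    by simp
qed

lemma row_coincidences_subset_at_fiber:
  assumes cS: "coherent_config \<Omega> S" and fis: "fission \<Omega> S T"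
    and fiber: "{(\<alpha>, \<alpha>)} \<in> T" and "\<alpha> \<in> \<Omega>" "\<gamma> \<in> \<Omega>"
  shows "row_coincidences \<Omega> T \<gamma> \<subseteq> row_coincidences \<Omega> S \<alpha>"
proof
  have cT: "coherent_config \<Omega> T"
    using fis by (simp add: fission_def)
  have "(\<gamma>, \<alpha>) \<in> \<Omega> \<times> \<Omega>"
    using assms(4,5) by simp
  then obtain r where r: "r \<in> T" "(\<gamma>, \<alpha>) \<in> r"
    by (rule cc_basicE[OF cT])
  have "(\<gamma>, e) \<in> r \<longleftrightarrow> e = \<alpha>" for e
    using fiber_column[OF cT fiber r, of \<gamma> e] r(2) by auto
  then have row: "{e. (\<gamma>, e) \<in> r} = {\<alpha>}"
    by auto
  fix p assume "p \<in> row_coincidences \<Omega> T \<gamma>"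
  then obtain \<delta> \<delta>' where p: "p = (\<delta>, \<delta>')" "\<delta> \<in> \<Omega>" "\<delta>' \<in> \<Omega>" "\<delta> \<noteq> \<delta>'"
    and same: "same_class T (\<gamma>, \<delta>) (\<gamma>, \<delta>')"
    unfolding row_coincidences_def by blast
  from same_class_transfer[OF cT r(1) row same]
  have "same_class S (\<alpha>, \<delta>) (\<alpha>, \<delta>')"
    by (rule fission_same_class[OF cS fis])
  with p show "p \<in> row_coincidences \<Omega> S \<alpha>"
    unfolding row_coincidences_def by simp
qed

lemma row_coincidences_cover:
  assumes cT: "coherent_config \<Omega> T" and "\<gamma> \<in> \<Omega>" and same: "same_class T (\<gamma>, x) (\<gamma>, x')"
  shows "\<Omega> \<subseteq> fst ` row_coincidences \<Omega> T \<gamma> \<union> {\<delta>\<in>\<Omega>. same_class T (\<delta>, x) (\<delta>, x')}"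
proof
  let ?D = "row_coincidences \<Omega> T \<gamma>"
  fix \<delta> assume \<delta>: "\<delta> \<in> \<Omega>"
  show "\<delta> \<in> fst ` ?D \<union> {\<delta>\<in>\<Omega>. same_class T (\<delta>, x) (\<delta>, x')}"
  proof (cases "\<delta> \<in> fst ` ?D")
    case False
    have "(\<gamma>, \<delta>) \<in> \<Omega> \<times> \<Omega>"
      using \<open>\<gamma> \<in> \<Omega>\<close> \<delta> by simp
    then obtain r where r: "r \<in> T" "(\<gamma>, \<delta>) \<in> r"
      by (rule cc_basicE[OF cT])
    have "{e. (\<gamma>, e) \<in> r} = {\<delta>}"
    proof (intro equalityI subsetI)
      fix e assume "e \<in> {e. (\<gamma>, e) \<in> r}"
      then have "(\<gamma>, e) \<in> r"
        by simp
      then have "e \<in> \<Omega>" and "same_class T (\<gamma>, \<delta>) (\<gamma>, e)"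
        using cc_basic_subset[OF cT r(1)] r unfolding same_class_def by blast+
      then have "e \<noteq> \<delta> \<Longrightarrow> (\<delta>, e) \<in> ?D"
        using \<delta> unfolding row_coincidences_def by simp
      with False show "e \<in> {\<delta>}"
        by (metis fst_conv image_eqI singletonI)
    qed (use r in simp)
    then have "same_class T (\<delta>, x) (\<delta>, x')"
      by (rule same_class_transfer[OF cT r(1) _ same])
    with \<delta> show ?thesis
      by blast
  qed blast
qed

lemma card_row_coincidences_lower:
  assumes cS: "coherent_config \<Omega> S" and fis: "fission \<Omega> S T" and "\<gamma> \<in> \<Omega>"
    and crowded: "\<exists>t\<in>T. \<not> card {\<delta>. (\<gamma>, \<delta>) \<in> t} \<le> 1"
  shows "max 1 (card \<Omega> - indist_number \<Omega> S) \<le> card (row_coincidences \<Omega> T \<gamma>)"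
proof -
  let ?D = "row_coincidences \<Omega> T \<gamma>"
  have cT: "coherent_config \<Omega> T"
    using fis by (simp add: fission_def)
  have fin: "finite \<Omega>"
    by (rule cc_finite[OF cS])
  obtain t where t: "t \<in> T" "\<not> card {\<delta>. (\<gamma>, \<delta>) \<in> t} \<le> 1"
    using crowded by blast
  have "finite {\<delta>. (\<gamma>, \<delta>) \<in> t}"
    using cc_basic_subset[OF cT t(1)] by (intro finite_subset[OF _ fin]) blast
  with t(2) obtain x x' where "(\<gamma>, x) \<in> t" "(\<gamma>, x') \<in> t" "x \<noteq> x'"
    by (auto simp: card_le_Suc0_iff_eq)
  then have same: "same_class T (\<gamma>, x) (\<gamma>, x')"
    unfolding same_class_def using t(1) by blast
  have x: "x \<in> \<Omega>" "x' \<in> \<Omega>"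
    using same_class_mem[OF cT same] by auto
  then have "(x, x') \<in> ?D"
    using same \<open>x \<noteq> x'\<close> unfolding row_coincidences_def by simp
  then have "1 \<le> card ?D"
    using finite_row_coincidences[OF fin] by (metis One_nat_def Suc_leI card_gt_0_iff empty_iff)
  have "card \<Omega> \<le> card (fst ` ?D \<union> {\<delta>\<in>\<Omega>. same_class T (\<delta>, x) (\<delta>, x')})"
    using row_coincidences_cover[OF cT \<open>\<gamma> \<in> \<Omega>\<close> same] fin finite_row_coincidences[OF fin]
    by (intro card_mono) auto
  also have "\<dots> \<le> card (fst ` ?D) + card {\<delta>\<in>\<Omega>. same_class T (\<delta>, x) (\<delta>, x')}"
    by (rule card_Un_le)
  also have "\<dots> \<le> card ?D + indist_number \<Omega> S"
    using card_image_le[OF finite_row_coincidences[OF fin]]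
      card_same_class_column_le[OF cS fis x \<open>x \<noteq> x'\<close>] by (rule add_mono)
  finally show ?thesis
    using \<open>1 \<le> card ?D\<close> by simp
qed

lemma sum_card_row_coincidences_upper:
  assumes cS: "coherent_config \<Omega> S" and fis: "fission \<Omega> S T"
    and fiber: "{(\<alpha>, \<alpha>)} \<in> T" and "\<alpha> \<in> \<Omega>"
  shows "(\<Sum>\<gamma>\<in>\<Omega>. card (row_coincidences \<Omega> T \<gamma>))
    \<le> card \<Omega> * (indist_number \<Omega> S * (n_max \<Omega> S - 1))"
proof -
  let ?D = "row_coincidences \<Omega> T"
  let ?P = "row_coincidences \<Omega> S \<alpha>"
  have fin: "finite \<Omega>"
    by (rule cc_finite[OF cS])
  have "(\<Sum>\<gamma>\<in>\<Omega>. card (?D \<gamma>)) = (\<Sum>\<gamma>\<in>\<Omega>. \<Sum>p\<in>{p\<in>?P. p \<in> ?D \<gamma>}. 1)"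
    using row_coincidences_subset_at_fiber[OF cS fis fiber \<open>\<alpha> \<in> \<Omega>\<close>]
    by (intro sum.cong refl) (simp add: Collect_conj_eq Int_absorb1 Int_commute)
  also have "\<dots> = (\<Sum>p\<in>?P. \<Sum>\<gamma>\<in>{\<gamma>\<in>\<Omega>. p \<in> ?D \<gamma>}. 1)"
    by (rule sum.swap_restrict[OF fin finite_row_coincidences[OF fin]])
  also have "\<dots> \<le> (\<Sum>p\<in>?P. indist_number \<Omega> S)"
  proof (rule sum_mono)
    fix p assume "p \<in> ?P"
    then obtain \<delta> \<delta>' where p: "p = (\<delta>, \<delta>')" "\<delta> \<in> \<Omega>" "\<delta>' \<in> \<Omega>" "\<delta> \<noteq> \<delta>'"
      unfolding row_coincidences_def by blast
    have "{\<gamma>\<in>\<Omega>. p \<in> ?D \<gamma>} \<subseteq> {\<gamma>\<in>\<Omega>. same_class T (\<gamma>, \<delta>) (\<gamma>, \<delta>')}"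
      unfolding p(1) row_coincidences_def by blast
    then have "card {\<gamma>\<in>\<Omega>. p \<in> ?D \<gamma>} \<le> card {\<gamma>\<in>\<Omega>. same_class T (\<gamma>, \<delta>) (\<gamma>, \<delta>')}"
      using fin by (intro card_mono) auto
    then show "(\<Sum>\<gamma>\<in>{\<gamma>\<in>\<Omega>. p \<in> ?D \<gamma>}. 1) \<le> indist_number \<Omega> S"
      using card_same_class_column_le[OF cS fis p(2-4)] by simp
  qed
  also have "\<dots> = card ?P * indist_number \<Omega> S"
    by simp
  also have "\<dots> \<le> card \<Omega> * (n_max \<Omega> S - 1) * indist_number \<Omega> S"
    using card_row_coincidences_le[OF cS \<open>\<alpha> \<in> \<Omega>\<close>] by simp
  finally show ?thesis
    by (simp add: mult.commute mult.left_commute)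
qed

lemma one_regular_fission_with_fiber:
  assumes cS: "coherent_config \<Omega> S" and fis: "fission \<Omega> S T"
    and fiber: "{(\<alpha>, \<alpha>)} \<in> T" and "\<alpha> \<in> \<Omega>"
    and small: "2 * indist_number \<Omega> S * (n_max \<Omega> S - 1) < card \<Omega>"
  shows "one_regular \<Omega> T"
proof (rule ccontr)
  assume irregular: "\<not> one_regular \<Omega> T"
  define n where "n = card \<Omega>"
  define c where "c = indist_number \<Omega> S"
  define K where "K = c * (n_max \<Omega> S - 1)"
  have "max 1 (n - c) \<le> card (row_coincidences \<Omega> T \<gamma>)" if "\<gamma> \<in> \<Omega>" for \<gamma>
    using card_row_coincidences_lower[OF cS fis that] irregular that
    unfolding one_regular_def n_def c_def by auto
  then have "n * max 1 (n - c) \<le> (\<Sum>\<gamma>\<in>\<Omega>. card (row_coincidences \<Omega> T \<gamma>))"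
    using sum_bounded_below[of \<Omega> "max 1 (n - c)"] unfolding n_def by simp
  also have "\<dots> \<le> n * K"
    using sum_card_row_coincidences_upper[OF cS fis fiber \<open>\<alpha> \<in> \<Omega>\<close>] unfolding n_def c_def K_def .
  finally have "n * max 1 (n - c) \<le> n * K" .
  moreover have "0 < n"
    using \<open>\<alpha> \<in> \<Omega>\<close> cc_finite[OF cS] unfolding n_def by (auto simp: card_gt_0_iff)
  ultimately have "max 1 (n - c) \<le> K"
    by simp
  then have "c \<le> K"
    unfolding K_def by (cases "n_max \<Omega> S - 1") auto
  with \<open>max 1 (n - c) \<le> K\<close> small show False
    unfolding n_def c_def K_def by linarith
qed

section \<open>Joins of coherent configurations\<close>

text \<open>The diagonal of \<open>\<Omega> \<times> \<Omega>\<close> is included so that \<open>join_rel\<close> is an equivalence on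
  \<open>\<Omega> \<times> \<Omega>\<close> even for empty \<open>\<T>\<close>.\<close>

definition join_rel :: "'a set \<Rightarrow> ('a \<times> 'a) set set set \<Rightarrow> (('a \<times> 'a) \<times> ('a \<times> 'a)) set" where
  "join_rel \<Omega> \<T> = (Id_on (\<Omega> \<times> \<Omega>) \<union> {(p, q). \<exists>T\<in>\<T>. same_class T p q})\<^sup>+"

definition config_join :: "'a set \<Rightarrow> ('a \<times> 'a) set set set \<Rightarrow> ('a \<times> 'a) set set" where
  "config_join \<Omega> \<T> = (\<Omega> \<times> \<Omega>) // join_rel \<Omega> \<T>"

lemma config_joinE:
  assumes "j \<in> config_join \<Omega> \<T>"
  obtains x where "j = join_rel \<Omega> \<T> `` {x}" "x \<in> \<Omega> \<times> \<Omega>"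
  using assms unfolding config_join_def by (blast elim: quotientE)

lemma equiv_join_rel:
  assumes "\<forall>T\<in>\<T>. coherent_config \<Omega> T"
  shows "equiv (\<Omega> \<times> \<Omega>) (join_rel \<Omega> \<T>)"
proof -
  let ?R = "Id_on (\<Omega> \<times> \<Omega>) \<union> {(p, q). \<exists>T\<in>\<T>. same_class T p q}"
  have "?R \<subseteq> (\<Omega> \<times> \<Omega>) \<times> (\<Omega> \<times> \<Omega>)"
    using assms by (auto dest: same_class_mem)
  moreover have "sym ?R"
    unfolding sym_def same_class_def by auto
  ultimately show ?thesis
    unfolding join_rel_def
    by (intro equivI trancl_subset_Sigma sym_trancl trans_trancl) (auto simp: refl_on_def)
qed

lemma join_rel_step: "T \<in> \<T> \<Longrightarrow> same_class T p q \<Longrightarrow> (p, q) \<in> join_rel \<Omega> \<T>"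
  unfolding join_rel_def by blast

lemma join_rel_invariant:
  assumes "(p, q) \<in> join_rel \<Omega> \<T>"
    and invariant: "\<And>T p q. T \<in> \<T> \<Longrightarrow> same_class T p q \<Longrightarrow> f p = f q"
  shows "f p = f q"
proof -
  have one_step: "f x = f y" if "(x, y) \<in> Id_on (\<Omega> \<times> \<Omega>) \<union> {(p, q). \<exists>T\<in>\<T>. same_class T p q}" for x y
    using that
  proof (elim UnE)
    assume "(x, y) \<in> {(p, q). \<exists>T\<in>\<T>. same_class T p q}"
    then obtain T where "T \<in> \<T>" "same_class T x y"
      by blast
    then show ?thesis
      by (rule invariant)
  qed auto
  from assms(1) show ?thesis
    unfolding join_rel_def
  proof (induction rule: trancl_induct)
    case (base y)
    then show ?case
      by (rule one_step)
  next
    case (step y z)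
    then show ?case
      using one_step[of y z] by simp
  qed
qed

lemma join_rel_swap:
  assumes "\<forall>T\<in>\<T>. coherent_config \<Omega> T" and "(p, q) \<in> join_rel \<Omega> \<T>"
  shows "(prod.swap p, prod.swap q) \<in> join_rel \<Omega> \<T>"
proof -
  have swap_step: "(prod.swap x, prod.swap y) \<in> join_rel \<Omega> \<T>"
    if "(x, y) \<in> Id_on (\<Omega> \<times> \<Omega>) \<union> {(p, q). \<exists>T\<in>\<T>. same_class T p q}" for x y
    using that
  proof (elim UnE)
    assume "(x, y) \<in> Id_on (\<Omega> \<times> \<Omega>)"
    then have "(prod.swap x, prod.swap y) \<in> Id_on (\<Omega> \<times> \<Omega>)"
      by auto
    then show ?thesis
      unfolding join_rel_def by (intro r_into_trancl UnI1)
  next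
    assume "(x, y) \<in> {(p, q). \<exists>T\<in>\<T>. same_class T p q}"
    then obtain T where "T \<in> \<T>" "same_class T x y"
      by blast
    with assms(1) show ?thesis
      by (blast intro: join_rel_step same_class_swap)
  qed
  from assms(2) show ?thesis
    unfolding join_rel_def
  proof (induction rule: trancl_induct)
    case (base q)
    then show ?case
      using swap_step unfolding join_rel_def by blast
  next
    case (step q q')
    then show ?case
      using swap_step unfolding join_rel_def by (blast intro: trancl_trans)
  qed
qed

lemma config_join_saturated:
  assumes "j \<in> config_join \<Omega> \<T>" "T \<in> \<T>" "t \<in> T" "z \<in> t" "z \<in> j"
  shows "t \<subseteq> j"
proof
  fix w assume "w \<in> t"
  obtain x where j: "j = join_rel \<Omega> \<T> `` {x}"
    using assms(1) by (blast elim: config_joinE)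
  have "(x, z) \<in> join_rel \<Omega> \<T>"
    using assms(5) j by simp
  moreover have "same_class T z w"
    unfolding same_class_def using assms(3,4) \<open>w \<in> t\<close> by blast
  then have "(z, w) \<in> join_rel \<Omega> \<T>"
    by (rule join_rel_step[OF assms(2)])
  ultimately show "w \<in> j"
    unfolding j join_rel_def by (simp add: trancl_trans)
qed

lemma config_join_eq_Union:
  assumes cT: "\<forall>T\<in>\<T>. coherent_config \<Omega> T" and "T \<in> \<T>" "j \<in> config_join \<Omega> \<T>"
  shows "j = \<Union>{t\<in>T. t \<subseteq> j}"
proof (intro equalityI subsetI)
  fix z assume "z \<in> j"
  moreover have "j \<subseteq> \<Omega> \<times> \<Omega>"
    using in_quotient_imp_subset[OF equiv_join_rel[OF cT]] assms(3)
    unfolding config_join_def by blast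
  ultimately obtain t where "t \<in> T" "z \<in> t"
    using cc_basicE[of \<Omega> T z] cT assms(2) by blast
  with config_join_saturated[OF assms(3,2)] \<open>z \<in> j\<close> show "z \<in> \<Union>{t\<in>T. t \<subseteq> j}"
    by blast
qed blast

lemma fission_config_join:
  assumes "\<forall>T\<in>\<T>. coherent_config \<Omega> T" and "T \<in> \<T>"
  shows "fission \<Omega> (config_join \<Omega> \<T>) T"
  unfolding fission_def
proof (intro conjI ballI)
  show "coherent_config \<Omega> T"
    using assms by blast
  fix j assume "j \<in> config_join \<Omega> \<T>"
  have "{t\<in>T. t \<subseteq> j} \<subseteq> T"
    by blast
  with config_join_eq_Union[OF assms \<open>j \<in> config_join \<Omega> \<T>\<close>] show "\<exists>U\<subseteq>T. j = \<Union>U"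
    by (intro exI[of _ "{t\<in>T. t \<subseteq> j}"] conjI)
qed

lemma join_rel_respects_Union:
  assumes cT: "\<forall>T\<in>\<T>. coherent_config \<Omega> T" and unions: "\<forall>T\<in>\<T>. \<exists>U\<subseteq>T. s = \<Union>U"
    and "(p, q) \<in> join_rel \<Omega> \<T>"
  shows "p \<in> s \<longleftrightarrow> q \<in> s"
proof (rule join_rel_invariant[OF assms(3)])
  fix T q q' assume "T \<in> \<T>" "same_class T q q'"
  then obtain t where t: "t \<in> T" "q \<in> t" "q' \<in> t"
    unfolding same_class_def by blast
  obtain U where "U \<subseteq> T" "s = \<Union>U"
    using unions \<open>T \<in> \<T>\<close> by blast
  with cc_in_Union_iff[of \<Omega> T U t] cT \<open>T \<in> \<T>\<close> t show "(q \<in> s) = (q' \<in> s)"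
    by simp
qed

lemma config_join_subset_or_disjoint:
  assumes cT: "\<forall>T\<in>\<T>. coherent_config \<Omega> T" and unions: "\<forall>T\<in>\<T>. \<exists>U\<subseteq>T. s = \<Union>U"
    and "j \<in> config_join \<Omega> \<T>"
  shows "j \<subseteq> s \<or> j \<inter> s = {}"
proof -
  obtain x where j: "j = join_rel \<Omega> \<T> `` {x}"
    using assms(3) by (blast elim: config_joinE)
  have "z \<in> s \<longleftrightarrow> x \<in> s" if "z \<in> j" for z
    using join_rel_respects_Union[OF cT unions, of x z] that j by simp
  then show ?thesis
    by (cases "x \<in> s") auto
qed

lemma config_join_converse:
  assumes cT: "\<forall>T\<in>\<T>. coherent_config \<Omega> T" and "j \<in> config_join \<Omega> \<T>"
  shows "converse j \<in> config_join \<Omega> \<T>"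
proof -
  obtain x where j: "j = join_rel \<Omega> \<T> `` {x}" and x: "x \<in> \<Omega> \<times> \<Omega>"
    using assms(2) by (blast elim: config_joinE)
  have "converse j = join_rel \<Omega> \<T> `` {prod.swap x}"
  proof (intro equalityI subsetI)
    fix z assume "z \<in> converse j"
    then have "(x, prod.swap z) \<in> join_rel \<Omega> \<T>"
      using j swap_in_converse[of "prod.swap z" j] by simp
    then show "z \<in> join_rel \<Omega> \<T> `` {prod.swap x}"
      using join_rel_swap[OF cT] by fastforce
  next
    fix z assume "z \<in> join_rel \<Omega> \<T> `` {prod.swap x}"
    then have "(x, prod.swap z) \<in> join_rel \<Omega> \<T>"
      using join_rel_swap[OF cT, of "prod.swap x" z] by simp
    then show "z \<in> converse j"
      using j swap_in_converse[of "prod.swap z" j] by simp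
  qed
  moreover have "prod.swap x \<in> \<Omega> \<times> \<Omega>"
    using x by auto
  ultimately show ?thesis
    unfolding config_join_def by (simp add: quotientI)
qed

lemma config_join_intersection_count_eq:
  assumes cT: "\<forall>T\<in>\<T>. coherent_config \<Omega> T"
    and "r \<in> config_join \<Omega> \<T>" "s \<in> config_join \<Omega> \<T>" "t \<in> config_join \<Omega> \<T>"
    and "(a, b) \<in> t" "(a', b') \<in> t"
  shows "intersection_count r s a b = intersection_count r s a' b'"
proof -
  define f where "f q = intersection_count r s (fst q) (snd q)" for q
  have invariant: "f q = f q'" if T: "T \<in> \<T>" and same: "same_class T q q'" for T q q'
  proof -
    obtain u where u: "u \<in> T" "q \<in> u" "q' \<in> u"
      using same unfolding same_class_def by blast
    have "coherent_config \<Omega> T"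
      using cT T by blast
    from intersection_count_Union_eq[OF this _ _ u(1), of "{t\<in>T. t \<subseteq> r}" "{t\<in>T. t \<subseteq> s}"
        "fst q" "snd q" "fst q'" "snd q'"]
    have "intersection_count (\<Union>{t\<in>T. t \<subseteq> r}) (\<Union>{t\<in>T. t \<subseteq> s}) (fst q) (snd q)
        = intersection_count (\<Union>{t\<in>T. t \<subseteq> r}) (\<Union>{t\<in>T. t \<subseteq> s}) (fst q') (snd q')"
      using u by simp
    moreover have "r = \<Union>{t\<in>T. t \<subseteq> r}" "s = \<Union>{t\<in>T. t \<subseteq> s}"
      using config_join_eq_Union[OF cT T] assms(2,3) by blast+
    ultimately show ?thesis
      unfolding f_def by simp
  qed
  obtain x where "t = join_rel \<Omega> \<T> `` {x}"
    using assms(4) by (blast elim: config_joinE)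
  then have "(x, (a, b)) \<in> join_rel \<Omega> \<T>" "(x, (a', b')) \<in> join_rel \<Omega> \<T>"
    using assms(5,6) by auto
  then have "f x = f (a, b)" "f x = f (a', b')"
    using join_rel_invariant invariant by metis+
  then show ?thesis
    unfolding f_def by simp
qed

lemma coherent_config_join:
  assumes "finite \<Omega>" and cT: "\<forall>T\<in>\<T>. coherent_config \<Omega> T"
  shows "coherent_config \<Omega> (config_join \<Omega> \<T>)"
proof -
  let ?J = "config_join \<Omega> \<T>"
  note equiv = equiv_join_rel[OF cT]
  have diagonal: "j \<subseteq> Id_on \<Omega> \<or> j \<inter> Id_on \<Omega> = {}" if "j \<in> ?J" for j
  proof (rule config_join_subset_or_disjoint[OF cT _ that], intro ballI)
    fix T assume "T \<in> \<T>"
    with cT have "Id_on \<Omega> = \<Union>{t\<in>T. t \<subseteq> Id_on \<Omega>}"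
      by (simp add: cc_Id_on_eq_Union)
    then show "\<exists>U\<subseteq>T. Id_on \<Omega> = \<Union>U"
      by (intro exI[of _ "{t\<in>T. t \<subseteq> Id_on \<Omega>}"] conjI) blast+
  qed
  have intersection: "\<forall>r\<in>?J. \<forall>s\<in>?J. \<forall>t\<in>?J. \<forall>x\<in>t. \<forall>y\<in>t.
      card {\<gamma>. (fst x, \<gamma>) \<in> r \<and> (\<gamma>, snd x) \<in> s} = card {\<gamma>. (fst y, \<gamma>) \<in> r \<and> (\<gamma>, snd y) \<in> s}"
  proof (intro ballI)
    fix r s t x y assume "r \<in> ?J" "s \<in> ?J" "t \<in> ?J" "x \<in> t" "y \<in> t"
    then show "card {\<gamma>. (fst x, \<gamma>) \<in> r \<and> (\<gamma>, snd x) \<in> s} = card {\<gamma>. (fst y, \<gamma>) \<in> r \<and> (\<gamma>, snd y) \<in> s}"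
      using config_join_intersection_count_eq[OF cT, of r s t "fst x" "snd x" "fst y" "snd y"]
      by (simp add: intersection_count_def)
  qed
  show ?thesis
    unfolding coherent_config_def
  proof (intro conjI ballI impI)
    show "\<Union>?J = \<Omega> \<times> \<Omega>"
      unfolding config_join_def by (rule Union_quotient[OF equiv])
    fix s assume "s \<in> ?J"
    then show "s \<noteq> {}"
      unfolding config_join_def by (rule in_quotient_imp_non_empty[OF equiv])
    show "s \<subseteq> Id_on \<Omega> \<or> s \<inter> Id_on \<Omega> = {}"
      using \<open>s \<in> ?J\<close> by (rule diagonal)
    show "converse s \<in> ?J"
      using \<open>s \<in> ?J\<close> by (rule config_join_converse[OF cT])
    fix t assume "t \<in> ?J" "s \<noteq> t"
    then show "s \<inter> t = {}"
      using quotient_disj[OF equiv] \<open>s \<in> ?J\<close> unfolding config_join_def by blast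
  qed (use assms(1) intersection in blast)+
qed

lemma config_join_fission:
  assumes cS: "coherent_config \<Omega> S" and fis: "\<forall>T\<in>\<T>. fission \<Omega> S T"
  shows "fission \<Omega> S (config_join \<Omega> \<T>)"
proof -
  have cT: "\<forall>T\<in>\<T>. coherent_config \<Omega> T"
    using fis by (simp add: fission_def)
  note equiv = equiv_join_rel[OF cT]
  have union: "s = \<Union>{j \<in> config_join \<Omega> \<T>. j \<subseteq> s}" if "s \<in> S" for s
  proof (intro equalityI subsetI)
    fix z assume "z \<in> s"
    then have z: "z \<in> \<Omega> \<times> \<Omega>"
      using cc_basic_subset[OF cS \<open>s \<in> S\<close>] by blast
    have unions: "\<forall>T\<in>\<T>. \<exists>U\<subseteq>T. s = \<Union>U"
      using fis \<open>s \<in> S\<close> unfolding fission_def by blast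
    have "join_rel \<Omega> \<T> `` {z} \<in> config_join \<Omega> \<T>"
      unfolding config_join_def using z by (rule quotientI)
    moreover have "z \<in> join_rel \<Omega> \<T> `` {z}"
      using z by (rule equiv_class_self[OF equiv])
    ultimately show "z \<in> \<Union>{j \<in> config_join \<Omega> \<T>. j \<subseteq> s}"
      using config_join_subset_or_disjoint[OF cT unions] \<open>z \<in> s\<close> by blast
  qed blast
  show ?thesis
    unfolding fission_def
  proof (intro conjI ballI)
    show "coherent_config \<Omega> (config_join \<Omega> \<T>)"
      by (rule coherent_config_join[OF cc_finite[OF cS] cT])
    fix s assume "s \<in> S"
    have "{j \<in> config_join \<Omega> \<T>. j \<subseteq> s} \<subseteq> config_join \<Omega> \<T>"
      by blast
    with union[OF \<open>s \<in> S\<close>] show "\<exists>U\<subseteq>config_join \<Omega> \<T>. s = \<Union>U"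
      by (intro exI[of _ "{j \<in> config_join \<Omega> \<T>. j \<subseteq> s}"] conjI)
  qed
qed

lemma config_join_fiber:
  assumes cT: "\<forall>T\<in>\<T>. coherent_config \<Omega> T" and fiber: "\<forall>T\<in>\<T>. {(\<beta>, \<beta>)} \<in> T"
    and "\<beta> \<in> \<Omega>"
  shows "{(\<beta>, \<beta>)} \<in> config_join \<Omega> \<T>"
proof -
  let ?C = "join_rel \<Omega> \<T> `` {(\<beta>, \<beta>)}"
  have C: "?C \<in> config_join \<Omega> \<T>"
    unfolding config_join_def using \<open>\<beta> \<in> \<Omega>\<close> by (simp add: quotientI)
  have "(\<beta>, \<beta>) \<in> ?C"
    using \<open>\<beta> \<in> \<Omega>\<close> by (intro equiv_class_self[OF equiv_join_rel[OF cT]]) simp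
  moreover have "\<forall>T\<in>\<T>. \<exists>U\<subseteq>T. {(\<beta>, \<beta>)} = \<Union>U"
    using fiber by (intro ballI exI[of _ "{{(\<beta>, \<beta>)}}"]) auto
  ultimately have "?C = {(\<beta>, \<beta>)}"
    using config_join_subset_or_disjoint[OF cT _ C] by blast
  with C show ?thesis
    by simp
qed

lemma smallest_point_fission_exists:
  assumes cS: "coherent_config \<Omega> S" and "B \<subseteq> \<Omega>"
  shows "\<exists>T. smallest_point_fission \<Omega> S B T"
proof -
  define \<T> where "\<T> = {T. fission \<Omega> S T \<and> (\<forall>\<beta>\<in>B. {(\<beta>, \<beta>)} \<in> T)}"
  have cT: "\<forall>T\<in>\<T>. coherent_config \<Omega> T"
    unfolding \<T>_def fission_def by blast
  have "smallest_point_fission \<Omega> S B (config_join \<Omega> \<T>)"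
    unfolding smallest_point_fission_def
  proof (intro conjI ballI allI impI)
    show "fission \<Omega> S (config_join \<Omega> \<T>)"
      by (rule config_join_fission[OF cS]) (simp add: \<T>_def)
    fix \<beta> assume "\<beta> \<in> B"
    then show "{(\<beta>, \<beta>)} \<in> config_join \<Omega> \<T>"
      using config_join_fiber[OF cT] \<open>B \<subseteq> \<Omega>\<close> unfolding \<T>_def by blast
  next
    fix T' assume "fission \<Omega> S T' \<and> (\<forall>\<beta>\<in>B. {(\<beta>, \<beta>)} \<in> T')"
    then show "fission \<Omega> (config_join \<Omega> \<T>) T'"
      by (intro fission_config_join[OF cT]) (simp add: \<T>_def)
  qed
  then show ?thesis ..
qed

section \<open>Bases\<close>

lemma singleton_row_at_one_regular_point:
  assumes c1: "coherent_config \<Omega> T1" and f12: "fission \<Omega> T1 T2" and "\<gamma> \<in> \<Omega>" "x \<in> \<Omega>"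
    and regular: "\<forall>t\<in>T1. card {\<delta>. (\<gamma>, \<delta>) \<in> t} \<le> 1" and fiber: "{(\<gamma>, \<gamma>)} \<in> T2"
  shows "{(\<gamma>, x)} \<in> T2"
proof -
  have c2: "coherent_config \<Omega> T2"
    using f12 by (simp add: fission_def)
  have "(\<gamma>, x) \<in> \<Omega> \<times> \<Omega>"
    using assms(3,4) by simp
  obtain w2 where w2: "w2 \<in> T2" "(\<gamma>, x) \<in> w2"
    using cc_basicE[OF c2 \<open>(\<gamma>, x) \<in> \<Omega> \<times> \<Omega>\<close>] .
  obtain w1 where w1: "w1 \<in> T1" "(\<gamma>, x) \<in> w1"
    using cc_basicE[OF c1 \<open>(\<gamma>, x) \<in> \<Omega> \<times> \<Omega>\<close>] .
  have "w2 \<subseteq> w1"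
    by (rule fission_basic_subset[OF f12 w2(1) w1(1) w2(2) w1(2)])
  have "finite {\<delta>. (\<gamma>, \<delta>) \<in> w1}"
    using cc_basic_subset[OF c1 w1(1)] by (intro finite_subset[OF _ cc_finite[OF c1]]) blast
  with regular w1 have row: "(\<gamma>, \<delta>) \<in> w1 \<Longrightarrow> \<delta> = x" for \<delta>
    by (auto simp: card_le_Suc0_iff_eq)
  have "w2 \<subseteq> {(\<gamma>, x)}"
  proof
    fix z assume "z \<in> w2"
    then obtain a b where z: "z = (a, b)" "(a, b) \<in> w2"
      by (cases z) simp
    then have "a = \<gamma>"
      using fiber_row[OF c2 fiber w2] by blast
    with z \<open>w2 \<subseteq> w1\<close> row show "z \<in> {(\<gamma>, x)}"
      by blast
  qed
  with w2 have "w2 = {(\<gamma>, x)}"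
    by blast
  with w2(1) show ?thesis
    by simp
qed

lemma complete_config_if_singleton_row:
  assumes cT: "coherent_config \<Omega> T" and "\<gamma> \<in> \<Omega>" and rows: "\<And>x. x \<in> \<Omega> \<Longrightarrow> {(\<gamma>, x)} \<in> T"
  shows "complete_config T"
  unfolding complete_config_def
proof
  fix t assume "t \<in> T"
  then obtain a b where ab: "(a, b) \<in> t"
    using cc_basic_nonempty[OF cT] by fast
  then have "a \<in> \<Omega>" "b \<in> \<Omega>"
    using cc_basic_subset[OF cT \<open>t \<in> T\<close>] by auto
  have "converse {(\<gamma>, a)} \<in> T"
    using cc_converse[OF cT rows[OF \<open>a \<in> \<Omega>\<close>]] .
  moreover have "converse {(\<gamma>, a)} = {(a, \<gamma>)}"
    by auto
  ultimately have r: "{(a, \<gamma>)} \<in> T"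
    by simp
  have count: "intersection_count {(a, \<gamma>)} {(\<gamma>, b)} a' b' = (if (a', b') = (a, b) then 1 else 0)" for a' b'
  proof -
    have "{e. (a', e) \<in> {(a, \<gamma>)} \<and> (e, b') \<in> {(\<gamma>, b)}} = (if (a', b') = (a, b) then {\<gamma>} else {})"
      by auto
    then show ?thesis
      by (simp add: intersection_count_def)
  qed
  have "t = {(a, b)}"
  proof (intro equalityI subsetI)
    fix z assume "z \<in> t"
    obtain a' b' where z: "z = (a', b')"
      by (cases z)
    with \<open>z \<in> t\<close> have "(a', b') \<in> t"
      by simp
    have "intersection_count {(a, \<gamma>)} {(\<gamma>, b)} a' b' = intersection_count {(a, \<gamma>)} {(\<gamma>, b)} a b"
      by (rule cc_intersection_count_eq[OF cT r rows[OF \<open>b \<in> \<Omega>\<close>] \<open>t \<in> T\<close> \<open>(a', b') \<in> t\<close> ab])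
    also have "\<dots> = 1"
      using count[of a b] by simp
    finally have "intersection_count {(a, \<gamma>)} {(\<gamma>, b)} a' b' \<noteq> 0"
      by simp
    then show "z \<in> {(a, b)}"
      using count[of a' b'] z by (cases "(a', b') = (a, b)") auto
  qed (use ab in simp)
  then show "card t = 1"
    by simp
qed

lemma is_base_pair_at_one_regular_point:
  assumes cS: "coherent_config \<Omega> S" and "\<alpha> \<in> \<Omega>" "\<gamma> \<in> \<Omega>"
    and T1: "smallest_point_fission \<Omega> S {\<alpha>} T1"
    and regular: "\<forall>t\<in>T1. card {\<delta>. (\<gamma>, \<delta>) \<in> t} \<le> 1"
  shows "is_base \<Omega> S {\<alpha>, \<gamma>}"
proof -
  have "{\<alpha>, \<gamma>} \<subseteq> \<Omega>"
    using assms(2,3) by simp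
  with smallest_point_fission_exists[OF cS] obtain T2
    where T2: "smallest_point_fission \<Omega> S {\<alpha>, \<gamma>} T2"
    by blast
  then have f2: "fission \<Omega> S T2" and fibers: "{(\<alpha>, \<alpha>)} \<in> T2" "{(\<gamma>, \<gamma>)} \<in> T2"
    unfolding smallest_point_fission_def by simp_all
  have c1: "coherent_config \<Omega> T1"
    using T1 unfolding smallest_point_fission_def fission_def by simp
  have f12: "fission \<Omega> T1 T2"
    using T1 f2 fibers(1) unfolding smallest_point_fission_def by simp
  have c2: "coherent_config \<Omega> T2"
    using f2 unfolding fission_def by simp
  have "{(\<gamma>, x)} \<in> T2" if "x \<in> \<Omega>" for x
    by (rule singleton_row_at_one_regular_point[OF c1 f12 \<open>\<gamma> \<in> \<Omega>\<close> that regular fibers(2)])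
  then have "complete_config T2"
    by (rule complete_config_if_singleton_row[OF c2 \<open>\<gamma> \<in> \<Omega>\<close>])
  with T2 assms(2,3) show ?thesis
    unfolding is_base_def by blast
qed

theorem theorem8p1:
  fixes \<Omega> :: "'a set" and S :: "('a \<times> 'a) set set"
  assumes "scheme \<Omega> S"
    and "4 * indist_number \<Omega> S * (n_max \<Omega> S - 1) < card \<Omega>"
  shows "(\<forall>\<alpha>\<in>\<Omega>. (\<exists>T. smallest_point_fission \<Omega> S {\<alpha>} T) \<and>
            (\<forall>T. smallest_point_fission \<Omega> S {\<alpha>} T \<longrightarrow> one_regular \<Omega> T))
         \<and> base_number \<Omega> S \<le> 2"
proof -
  have cS: "coherent_config \<Omega> S"
    using assms(1) by (simp add: scheme_def)
  have small: "2 * indist_number \<Omega> S * (n_max \<Omega> S - 1) < card \<Omega>"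
    using assms(2) by linarith
  have one_regular: "one_regular \<Omega> T" if "\<alpha> \<in> \<Omega>" "smallest_point_fission \<Omega> S {\<alpha>} T" for \<alpha> T
    using that one_regular_fission_with_fiber[OF cS _ _ _ small]
    unfolding smallest_point_fission_def by blast
  have "Id_on \<Omega> \<noteq> {}"
    using assms(1) cc_basic_nonempty[OF cS] by (simp add: scheme_def)
  then obtain \<alpha> where "\<alpha> \<in> \<Omega>"
    by auto
  then have "{\<alpha>} \<subseteq> \<Omega>"
    by simp
  with smallest_point_fission_exists[OF cS] obtain T1 where T1: "smallest_point_fission \<Omega> S {\<alpha>} T1"
    by blast
  then obtain \<gamma> where "\<gamma> \<in> \<Omega>" "\<forall>t\<in>T1. card {\<delta>. (\<gamma>, \<delta>) \<in> t} \<le> 1"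
    using one_regular[OF \<open>\<alpha> \<in> \<Omega>\<close>] unfolding one_regular_def by blast
  then have "is_base \<Omega> S {\<alpha>, \<gamma>}"
    using is_base_pair_at_one_regular_point[OF cS \<open>\<alpha> \<in> \<Omega>\<close> _ T1] by blast
  then have "base_number \<Omega> S \<le> card {\<alpha>, \<gamma>}"
    unfolding base_number_def by (blast intro: Least_le)
  also have "\<dots> \<le> 2"
    by (simp add: card_insert_if)
  finally show ?thesis
    using one_regular smallest_point_fission_exists[OF cS] by blast
qed

end
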